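(* Let $\mathbb{A}\in\mathbb{C}^{n\times n}$, $\mathbf{f}_1\in\mathbb{C}^n$, $\mathbf{f}_{i+1}=\mathbb{A}\mathbf{f}_i$. Let $z_1,\dots,z_\ell\in\mathbb{C}^n$ be linearly independent, $Z_\ell=(z_1,\dots,z_\ell)=QR$ a thin QR factorization ($Q\in\mathbb{C}^{n\times\ell}$ with orthonormal columns, $R\in\mathbb{C}^{\ell\times\ell}$ upper triangular nonsingular), and let $\lambda_1,\dots,\lambda_\ell\in\mathbb{C}$. For $i=1,\dots,m$ set $\mathbf{g}_i=Q^*\mathbf{f}_i$ and $\Delta_{\Lambda_i}=\operatorname{diag}(\lambda_1^{i-1},\dots,\lambda_\ell^{i-1})$ (with $\lambda^0=1$). Let $$\vec{\mathbf{g}}=\begin{pmatrix}\mathbf{g}_1\\ \vdots\\ \mathbf{g}_m\end{pmatrix},\quad S=\begin{pmatrix}R\Delta_{\Lambda_1}\\ \vdots\\ R\Delta_{\Lambda_m}\end{pmatrix},\quad \vec{\boldsymbol\alpha}_\star=\begin{pmatrix}\Delta_{\Lambda_1}\\ \vdots\\ \Delta_{\Lambda_m}\end{pmatrix}^{\dagger}(I_m\otimes R^{-1})\vec{\mathbf{g}}.$$ Let $M=I_m\otimes(RR^* )^{-1}$ and $\|x\|_M=\sqrt{x^*Mx}$. Then $\vec{\boldsymbol\alpha}_\star$ is the minimum $\|\cdot\|_2$-norm solution of the weighted least squares problem $\min_{\vec{\boldsymbol\alpha}\in\mathbb{C}^\ell}\|\vec{\mathbf{g}}-S\vec{\bolds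ymbol\alpha}\|_M$.
   Context: $\dagger$ denotes the Moore–Penrose pseudoinverse and $\otimes$ the Kronecker product. *)

theory Defs
  imports "Jordan_Normal_Form.Matrix"
begin

definition adj :: "complex mat \<Rightarrow> complex mat" where
  "adj A = mat (dim_col A) (dim_row A) (\<lambda>(i,j). cnj (A $$ (j,i)))"

definition kron :: "complex mat \<Rightarrow> complex mat \<Rightarrow> complex mat" where
  "kron A B = mat (dim_row A * dim_row B) (dim_col A * dim_col B)
     (\<lambda>(i,j). A $$ (i div dim_row B, j div dim_col B) * B $$ (i mod dim_row B, j mod dim_col B))"

definition is_pinv :: "complex mat \<Rightarrow> complex mat \<Rightarrow> bool" where
  "is_pinv A X \<longleftrightarrow> X \<in> carrier_mat (dim_col A) (dim_row A) \<and>
     A * X * A = A \<and> X * A * X = X \<and> adj (A * X) = A * X \<and> adj (X * A) = X * A"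

definition pinv :: "complex mat \<Rightarrow> complex mat" where
  "pinv A = (THE X. is_pinv A X)"

definition minv :: "complex mat \<Rightarrow> complex mat" where
  "minv A = (THE B. B \<in> carrier_mat (dim_row A) (dim_row A) \<and> inverts_mat A B \<and> inverts_mat B A)"

definition vnorm2 :: "complex vec \<Rightarrow> real" where
  "vnorm2 x = sqrt (\<Sum>i<dim_vec x. (cmod (x $ i))^2)"

definition Mnorm :: "complex mat \<Rightarrow> complex vec \<Rightarrow> real" where
  "Mnorm M x = sqrt (Re (conjugate x \<bullet> (M *\<^sub>v x)))"

definition stack_vecs :: "nat \<Rightarrow> nat \<Rightarrow> (nat \<Rightarrow> complex vec) \<Rightarrow> complex vec" where
  "stack_vecs k d v = vec (k * d) (\<lambda>p. v (p div d) $ (p mod d))"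

definition stack_mats :: "nat \<Rightarrow> nat \<Rightarrow> nat \<Rightarrow> (nat \<Rightarrow> complex mat) \<Rightarrow> complex mat" where
  "stack_mats k r c B = mat (k * r) c (\<lambda>(p,j). B (p div r) $$ (p mod r, j))"

end

(* Since M = I_m (x) (R R^* )^-1 = I_m (x) R^-* R^-1, the M-norm of the residual g - S a equals the
   Euclidean norm of h - D a, where h = (I_m (x) R^-1) g and D stacks the diagonal matrices
   diag (lam_j ^ k): the weighted problem is an ordinary least squares problem for D.
   For any matrix D and any solution X of the Penrose equations, X h is the minimum-norm least
   squares solution: the residual h - D X h is orthogonal to the range of D, and X h lies in the
   range of D^*, which is orthogonal to the kernel of D. The columns of D are orthogonal,
   D^* D = diag (sum_k |lam_j|^2k), which gives D^+ explicitly. *)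

theory Submission
  imports Defs
begin

lemma adj_dims [simp]: "dim_row (adj A) = dim_col A" "dim_col (adj A) = dim_row A"
  by (simp_all add: adj_def)

lemma index_adj [simp]: "i < dim_col A \<Longrightarrow> j < dim_row A \<Longrightarrow> adj A $$ (i,j) = cnj (A $$ (j,i))"
  by (simp add: adj_def)

lemma adj_carrier [simp]: "A \<in> carrier_mat r c \<Longrightarrow> adj A \<in> carrier_mat c r"
  by (rule carrier_matI) (simp_all add: carrier_matD)

lemma adj_adj [simp]: "adj (adj A) = A"
  by (rule eq_matI) (simp_all add: adj_def)

lemma adj_one [simp]: "adj (1\<^sub>m n) = 1\<^sub>m n"
  by (rule eq_matI) auto

lemma adj_mult:
  assumes "A \<in> carrier_mat r k" "B \<in> carrier_mat k c"
  shows "adj (A * B) = adj B * adj A"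
proof (rule eq_matI)
  fix i j assume "i < dim_row (adj B * adj A)" "j < dim_col (adj B * adj A)"
  with assms have i: "i < c" and j: "j < r" by auto
  have "adj (A * B) $$ (i,j) = cnj (\<Sum>q<k. A $$ (j,q) * B $$ (q,i))"
    using assms i j by (simp add: scalar_prod_def atLeast0LessThan)
  also have "\<dots> = (\<Sum>q<k. cnj (B $$ (q,i)) * cnj (A $$ (j,q)))"
    by (simp add: mult.commute)
  also have "\<dots> = (adj B * adj A) $$ (i,j)"
    using assms i j by (simp add: scalar_prod_def atLeast0LessThan)
  finally show "adj (A * B) $$ (i,j) = (adj B * adj A) $$ (i,j)" .
qed (use assms in auto)

lemma adj_mat_diag_of_real:
  "adj (mat_diag n (\<lambda>i. complex_of_real (d i))) = mat_diag n (\<lambda>i. complex_of_real (d i))"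
  by (rule eq_matI) (auto simp: mat_diag_def)

lemma conjugate_scalar_prod_adj:
  assumes "B \<in> carrier_mat r c" "y \<in> carrier_vec c" "w \<in> carrier_vec r"
  shows "conjugate y \<bullet> (adj B *\<^sub>v w) = conjugate (B *\<^sub>v y) \<bullet> w"
proof -
  have "conjugate y \<bullet> (adj B *\<^sub>v w) = (\<Sum>i<c. \<Sum>j<r. cnj (y $ i) * cnj (B $$ (j,i)) * w $ j)"
    using assms by (simp add: scalar_prod_def atLeast0LessThan sum_distrib_left mult.assoc)
  also have "\<dots> = (\<Sum>j<r. \<Sum>i<c. cnj (y $ i) * cnj (B $$ (j,i)) * w $ j)"
    by (rule sum.swap)
  also have "\<dots> = (\<Sum>j<r. cnj (\<Sum>i<c. B $$ (j,i) * y $ i) * w $ j)"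
    by (intro sum.cong refl) (simp add: sum_distrib_left sum_distrib_right mult_ac)
  also have "\<dots> = conjugate (B *\<^sub>v y) \<bullet> w"
    using assms by (simp add: scalar_prod_def atLeast0LessThan)
  finally show ?thesis .
qed

lemma vnorm2_nonneg: "0 \<le> vnorm2 v"
  by (simp add: vnorm2_def sum_nonneg)

lemma conjugate_scalar_prod_self: "conjugate v \<bullet> v = complex_of_real ((vnorm2 v)\<^sup>2)"
proof -
  have "conjugate v \<bullet> v = (\<Sum>i<dim_vec v. complex_of_real ((cmod (v $ i))\<^sup>2))"
    by (simp add: scalar_prod_def atLeast0LessThan complex_norm_square mult.commute
        del: of_real_power)
  then show ?thesis
    by (simp add: vnorm2_def sum_nonneg del: of_real_power)
qed

lemma vnorm2_eq_0_iff:
  assumes "v \<in> carrier_vec n"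
  shows "vnorm2 v = 0 \<longleftrightarrow> v = 0\<^sub>v n"
proof -
  have "vnorm2 v = 0 \<longleftrightarrow> (\<forall>i<n. v $ i = 0)"
    using assms by (simp add: vnorm2_def sum_nonneg_eq_0_iff Ball_def)
  with assms show ?thesis
    by (auto simp: vec_eq_iff)
qed

lemma vnorm2_pythagoras:
  assumes u: "u \<in> carrier_vec n" and w: "w \<in> carrier_vec n" and orth: "conjugate u \<bullet> w = 0"
  shows "(vnorm2 (u + w))\<^sup>2 = (vnorm2 u)\<^sup>2 + (vnorm2 w)\<^sup>2"
proof -
  have "conjugate w \<bullet> u = cnj (conjugate u \<bullet> w)"
    using conjugate_conjugate_sprod[OF u w] conjugate_vec_sprod_comm[OF u w] by simp
  then have orth': "conjugate w \<bullet> u = 0"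
    using orth by simp
  have "conjugate (u + w) \<bullet> (u + w)
      = conjugate u \<bullet> u + conjugate u \<bullet> w + (conjugate w \<bullet> u + conjugate w \<bullet> w)"
    using u w by (simp add: conjugate_add_vec[OF u w] add_scalar_prod_distrib[of _ n]
        scalar_prod_add_distrib[of _ n])
  then have "complex_of_real ((vnorm2 (u + w))\<^sup>2) = complex_of_real ((vnorm2 u)\<^sup>2 + (vnorm2 w)\<^sup>2)"
    unfolding conjugate_scalar_prod_self orth orth' by simp
  then show ?thesis
    by (simp only: of_real_eq_iff)
qed

lemma conjugate_scalar_prod_adj_mult:
  assumes "B \<in> carrier_mat r c" "x \<in> carrier_vec c"
  shows "conjugate x \<bullet> ((adj B * B) *\<^sub>v x) = conjugate (B *\<^sub>v x) \<bullet> (B *\<^sub>v x)"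
  using assms by (simp add: assoc_mult_mat_vec[of _ c r] conjugate_scalar_prod_adj)

lemma is_pinv_unique:
  assumes X: "is_pinv A X" and Y: "is_pinv A Y"
  shows "X = Y"
proof -
  define r c where "r = dim_row A" and "c = dim_col A"
  have A: "A \<in> carrier_mat r c" unfolding r_def c_def by (rule carrier_mat_triv)
  from X have Xc: "X \<in> carrier_mat c r" and AXA: "A * X * A = A" and XAX: "X * A * X = X"
    and AX: "adj (A * X) = A * X" and XA: "adj (X * A) = X * A"
    by (simp_all add: is_pinv_def r_def c_def)
  from Y have Yc: "Y \<in> carrier_mat c r" and AYA: "A * Y * A = A" and YAY: "Y * A * Y = Y"
    and AY: "adj (A * Y) = A * Y" and YA: "adj (Y * A) = Y * A"
    by (simp_all add: is_pinv_def r_def c_def)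
  have AYc: "A * Y \<in> carrier_mat r r" and YAc: "Y * A \<in> carrier_mat c c"
    and XAc: "X * A \<in> carrier_mat c c"
    using A Xc Yc by auto
  have "adj A = adj (A * Y * A)" using AYA by simp
  also have "\<dots> = adj A * (A * Y)" using adj_mult[OF AYc A] AY by simp
  finally have adjA_AY: "adj A = adj A * (A * Y)" .
  have "adj A = adj (A * (Y * A))" using AYA assoc_mult_mat[OF A Yc A] by simp
  also have "\<dots> = (Y * A) * adj A" using adj_mult[OF A YAc] YA by simp
  finally have adjA_YA: "adj A = (Y * A) * adj A" .
  have "A * X = adj X * adj A" using AX adj_mult[OF A Xc] by simp
  also have "\<dots> = (adj X * adj A) * (A * Y)"
    using adjA_AY assoc_mult_mat[OF adj_carrier[OF Xc] adj_carrier[OF A] AYc] by simp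
  also have "\<dots> = (A * X * A) * Y"
    using AX adj_mult[OF A Xc] assoc_mult_mat[OF _ A Yc, of "A * X" r] A Xc by simp
  finally have AX_AY: "A * X = A * Y" using AXA by simp
  have "X * A = adj A * adj X" using XA adj_mult[OF Xc A] by simp
  also have "\<dots> = (Y * A) * (adj A * adj X)"
    using adjA_YA assoc_mult_mat[OF YAc adj_carrier[OF A] adj_carrier[OF Xc]] by simp
  also have "\<dots> = Y * (A * X * A)"
    using XA adj_mult[OF Xc A] assoc_mult_mat[OF Yc A XAc] assoc_mult_mat[OF A Xc A] by simp
  finally have XA_YA: "X * A = Y * A" using AXA by simp
  have "X = (Y * A) * X" using XAX XA_YA by simp
  also have "\<dots> = (Y * A) * Y"
    using AX_AY assoc_mult_mat[OF Yc A Xc] assoc_mult_mat[OF Yc A Yc] by simp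
  finally show ?thesis using YAY by simp
qed

lemma pinv_eqI: "is_pinv A X \<Longrightarrow> pinv A = X"
  unfolding pinv_def using is_pinv_unique by blast

definition is_min_norm_minimizer :: "(complex vec \<Rightarrow> real) \<Rightarrow> nat \<Rightarrow> complex vec \<Rightarrow> bool" where
  "is_min_norm_minimizer F c x \<longleftrightarrow> x \<in> carrier_vec c
     \<and> (\<forall>a \<in> carrier_vec c. F x \<le> F a)
     \<and> (\<forall>b \<in> carrier_vec c. (\<forall>a \<in> carrier_vec c. F b \<le> F a) \<longrightarrow> b \<noteq> x \<longrightarrow> vnorm2 x < vnorm2 b)"

lemma is_min_norm_minimizer_cong:
  assumes "\<And>a. a \<in> carrier_vec c \<Longrightarrow> F a = G a"
  shows "is_min_norm_minimizer F c x \<longleftrightarrow> is_min_norm_minimizer G c x"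
  using assms by (auto simp: is_min_norm_minimizer_def)

lemma pinv_residual_pythagoras:
  assumes D: "D \<in> carrier_mat r c" and X: "is_pinv D X" and h: "h \<in> carrier_vec r"
    and a: "a \<in> carrier_vec c"
  shows "(vnorm2 (h - D *\<^sub>v a))\<^sup>2
    = (vnorm2 (h - D *\<^sub>v (X *\<^sub>v h)))\<^sup>2 + (vnorm2 (D *\<^sub>v (X *\<^sub>v h) - D *\<^sub>v a))\<^sup>2"
proof -
  from X D have Xc: "X \<in> carrier_mat c r" and DXD: "D * X * D = D" and DX: "adj (D * X) = D * X"
    by (auto simp: is_pinv_def)
  define x where "x = X *\<^sub>v h"
  have x: "x \<in> carrier_vec c" using Xc h by (simp add: x_def)
  have "adj D = adj (D * X * D)" using DXD by simp
  also have "\<dots> = adj D * (D * X)" using adj_mult[OF _ D, of "D * X" r] Xc D DX by simp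
  finally have adjD: "adj D = adj D * (D * X)" .
  have "adj D *\<^sub>v (D *\<^sub>v x) = (adj D * (D * X)) *\<^sub>v h"
    using assoc_mult_mat_vec[OF adj_carrier[OF D] mult_carrier_mat[OF D Xc] h] D Xc h
    by (simp add: x_def)
  then have normal_eq: "adj D *\<^sub>v (h - D *\<^sub>v x) = 0\<^sub>v c"
    using D h x adjD minus_cancel_vec[OF mult_mat_vec_carrier[OF adj_carrier[OF D] h]]
    by (simp add: mult_minus_distrib_mat_vec[of _ c r])
  have "h - D *\<^sub>v a = (h - D *\<^sub>v x) + (D *\<^sub>v x - D *\<^sub>v a)"
    by (rule eq_vecI) (use D h a x in simp_all)
  moreover have "conjugate (h - D *\<^sub>v x) \<bullet> (D *\<^sub>v x - D *\<^sub>v a) = 0"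
    using conjugate_scalar_prod_adj[OF adj_carrier[OF D], of "h - D *\<^sub>v x" "x - a"]
      normal_eq D h a x by (simp add: mult_minus_distrib_mat_vec[of _ r c])
  ultimately show ?thesis
    using vnorm2_pythagoras[of "h - D *\<^sub>v x" r "D *\<^sub>v x - D *\<^sub>v a"] D h a x
    by (simp add: x_def)
qed

lemma pinv_mult_vec_orthogonal_kernel:
  assumes D: "D \<in> carrier_mat r c" and X: "is_pinv D X" and h: "h \<in> carrier_vec r"
    and w: "w \<in> carrier_vec c" and Dw: "D *\<^sub>v w = 0\<^sub>v r"
  shows "conjugate (X *\<^sub>v h) \<bullet> w = 0"
proof -
  from X D have Xc: "X \<in> carrier_mat c r" and XDX: "X * D * X = X" and XD: "adj (X * D) = X * D"
    by (auto simp: is_pinv_def)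
  have y: "adj X *\<^sub>v (X *\<^sub>v h) \<in> carrier_vec r"
    using adj_carrier[OF Xc] mult_mat_vec_carrier[OF Xc h] by (rule mult_mat_vec_carrier)
  have "X = adj (X * D) * X" using XDX XD by simp
  then have "X = adj D * adj X * X" using adj_mult[OF Xc D] by simp
  then have "X *\<^sub>v h = (adj D * adj X * X) *\<^sub>v h" by (rule arg_cong)
  also have "\<dots> = adj D *\<^sub>v (adj X *\<^sub>v (X *\<^sub>v h))"
    using assoc_mult_mat_vec[OF mult_carrier_mat[OF adj_carrier[OF D] adj_carrier[OF Xc]] Xc h]
      assoc_mult_mat_vec[OF adj_carrier[OF D] adj_carrier[OF Xc] mult_mat_vec_carrier[OF Xc h]]
    by simp
  finally show ?thesis
    using conjugate_scalar_prod_adj[OF adj_carrier[OF D] y w] Dw y by simp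
qed

lemma is_min_norm_minimizer_pinv:
  assumes D: "D \<in> carrier_mat r c" and X: "is_pinv D X" and h: "h \<in> carrier_vec r"
  shows "is_min_norm_minimizer (\<lambda>a. vnorm2 (h - D *\<^sub>v a)) c (X *\<^sub>v h)"
proof -
  define x where "x = X *\<^sub>v h"
  have "X \<in> carrier_mat c r" using X D by (simp add: is_pinv_def)
  then have x: "x \<in> carrier_vec c" unfolding x_def using h by (rule mult_mat_vec_carrier)
  note pythagoras = pinv_residual_pythagoras[OF D X h, folded x_def]
  show ?thesis
    unfolding is_min_norm_minimizer_def x_def[symmetric]
  proof (intro conjI ballI impI)
    show "x \<in> carrier_vec c" by (rule x)
  next
    fix a :: "complex vec" assume "a \<in> carrier_vec c"
    then have "(vnorm2 (h - D *\<^sub>v x))\<^sup>2 \<le> (vnorm2 (h - D *\<^sub>v a))\<^sup>2"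
      using pythagoras by simp
    then show "vnorm2 (h - D *\<^sub>v x) \<le> vnorm2 (h - D *\<^sub>v a)"
      by (rule power2_le_imp_le) (rule vnorm2_nonneg)
  next
    fix b :: "complex vec" assume b: "b \<in> carrier_vec c" and ne: "b \<noteq> x"
      and b_min: "\<forall>a \<in> carrier_vec c. vnorm2 (h - D *\<^sub>v b) \<le> vnorm2 (h - D *\<^sub>v a)"
    have "vnorm2 (h - D *\<^sub>v b) \<le> vnorm2 (h - D *\<^sub>v x)" using b_min x by blast
    then have "(vnorm2 (D *\<^sub>v x - D *\<^sub>v b))\<^sup>2 \<le> 0"
      using pythagoras[OF b] power_mono[OF _ vnorm2_nonneg, of _ _ 2] by fastforce
    then have "vnorm2 (D *\<^sub>v x - D *\<^sub>v b) = 0" by simp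
    then have "D *\<^sub>v x - D *\<^sub>v b = 0\<^sub>v r" using D x b by (simp add: vnorm2_eq_0_iff[of _ r])
    then have "D *\<^sub>v (b - x) = 0\<^sub>v r"
      using D x b by (simp add: mult_minus_distrib_mat_vec[of _ r c] vec_eq_iff)
    then have "conjugate x \<bullet> (b - x) = 0"
      using pinv_mult_vec_orthogonal_kernel[OF D X h minus_carrier_vec[OF b x]] by (simp add: x_def)
    then have "(vnorm2 (x + (b - x)))\<^sup>2 = (vnorm2 x)\<^sup>2 + (vnorm2 (b - x))\<^sup>2"
      using x b by (intro vnorm2_pythagoras[of _ c]) simp_all
    moreover have "x + (b - x) = b" by (rule eq_vecI) (use x b in simp_all)
    moreover have "vnorm2 (b - x) \<noteq> 0" using ne x b by (auto simp: vnorm2_eq_0_iff[of _ c] vec_eq_iff)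
    ultimately have "(vnorm2 x)\<^sup>2 < (vnorm2 b)\<^sup>2" by simp
    then show "vnorm2 x < vnorm2 b"
      by (rule power2_less_imp_less) (rule vnorm2_nonneg)
  qed
qed

lemma mult_mat_diag_orthogonal_columns_support:
  assumes D: "D \<in> carrier_mat r c"
    and DD: "adj D * D = mat_diag c (\<lambda>j. complex_of_real (d j))"
  shows "D * mat_diag c (\<lambda>j. complex_of_real (inverse (d j) * d j)) = D"
proof (rule eq_matI)
  fix i j assume "i < dim_row D" "j < dim_col D"
  then have i: "i < r" and j: "j < c" using D by auto
  have "complex_of_real (\<Sum>i<r. (cmod (D $$ (i,j)))\<^sup>2) = (adj D * D) $$ (j,j)"
    using D j by (simp add: scalar_prod_def atLeast0LessThan complex_norm_square mult.commute
        del: of_real_power)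
  also have "\<dots> = complex_of_real (d j)"
    using j unfolding DD by (simp add: mat_diag_def)
  finally have "(\<Sum>i<r. (cmod (D $$ (i,j)))\<^sup>2) = d j"
    by (simp only: of_real_eq_iff)
  then have "d j = 0 \<Longrightarrow> D $$ (i,j) = 0"
    using i by (simp add: sum_nonneg_eq_0_iff)
  then show "(D * mat_diag c (\<lambda>j. complex_of_real (inverse (d j) * d j))) $$ (i,j) = D $$ (i,j)"
    using D i j by (cases "d j = 0") (simp_all add: mat_diag_mult_right)
qed (use D in \<open>simp_all add: mat_diag_def\<close>)

(* Zero columns (d j = 0, e.g. when there are no blocks at all) are covered by inverse 0 = 0. *)

lemma is_pinv_orthogonal_columns:
  assumes D: "D \<in> carrier_mat r c"
    and DD: "adj D * D = mat_diag c (\<lambda>j. complex_of_real (d j))"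
  shows "is_pinv D (mat_diag c (\<lambda>j. complex_of_real (inverse (d j))) * adj D)"
proof -
  define Dinv where "Dinv = mat_diag c (\<lambda>j. complex_of_real (inverse (d j)))"
  define E where "E = mat_diag c (\<lambda>j. complex_of_real (inverse (d j) * d j))"
  define X where "X = Dinv * adj D"
  have Dinv: "Dinv \<in> carrier_mat c c" and Ec: "E \<in> carrier_mat c c"
    by (simp_all add: Dinv_def E_def)
  have adjD: "adj D \<in> carrier_mat c r" using D by simp
  have Xc: "X \<in> carrier_mat c r" unfolding X_def using Dinv adjD by (rule mult_carrier_mat)
  have XD: "X * D = E"
    unfolding X_def assoc_mult_mat[OF Dinv adjD D] DD by (simp add: Dinv_def E_def)
  have DE: "D * E = D"
    unfolding E_def using D DD by (rule mult_mat_diag_orthogonal_columns_support)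
  have "complex_of_real (inverse (d j) * d j) * complex_of_real (inverse (d j))
      = complex_of_real (inverse (d j))" for j
    by (cases "d j = 0") simp_all
  then have EDinv: "E * Dinv = Dinv"
    unfolding E_def Dinv_def mat_diag_diag by presburger
  have "adj X = D * Dinv"
    unfolding X_def adj_mult[OF Dinv adjD] adj_adj unfolding Dinv_def adj_mat_diag_of_real ..
  then have DX: "adj (D * X) = D * X"
    using adj_mult[OF D Xc] assoc_mult_mat[OF D Dinv adjD] by (simp add: X_def)
  show ?thesis
    unfolding is_pinv_def Dinv_def[symmetric] X_def[symmetric]
  proof (intro conjI)
    show "X \<in> carrier_mat (dim_col D) (dim_row D)" using D Xc by simp
    show "D * X * D = D" using assoc_mult_mat[OF D Xc D] XD DE by simp
    show "X * D * X = X" using assoc_mult_mat[OF Ec Dinv adjD] XD EDinv by (simp add: X_def)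
    show "adj (D * X) = D * X" by (rule DX)
    show "adj (X * D) = X * D" unfolding XD E_def adj_mat_diag_of_real ..
  qed
qed

lemma sum_lessThan_mult_blocks:
  fixes m l :: nat
  shows "(\<Sum>p<m * l. f p) = (\<Sum>k<m. \<Sum>j<l. f (k * l + j))"
proof -
  have "(\<Sum>p\<in>{k * l..<k * l + l}. f p) = (\<Sum>j<l. f (k * l + j))" for k
    using sum.shift_bounds_nat_ivl[of f 0 "k * l" l] by (simp add: atLeast0LessThan add.commute)
  then show ?thesis
    by (simp flip: sum.nat_group)
qed

lemma block_index_less: "k < m \<Longrightarrow> j < l \<Longrightarrow> k * l + j < m * (l :: nat)"
  by (metis add.commute add_less_cancel_left less_le_trans mult_Suc mult_le_mono1 Suc_leI)

lemma div_mod_block_index_less: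
  fixes p m l :: nat
  assumes "p < m * l"
  shows "p div l < m" "p mod l < l"
  using assms by (auto simp: less_mult_imp_div_less) (metis mod_less_divisor mult_0_right neq0_conv not_less0)

lemma stack_vecs_carrier [simp]: "stack_vecs k d v \<in> carrier_vec (k * d)"
  by (simp add: stack_vecs_def)

lemma dim_stack_vecs [simp]: "dim_vec (stack_vecs k d v) = k * d"
  by (simp add: stack_vecs_def)

lemma index_stack_vecs [simp]: "p < k * d \<Longrightarrow> stack_vecs k d v $ p = v (p div d) $ (p mod d)"
  by (simp add: stack_vecs_def)

lemma stack_mats_carrier [simp]: "stack_mats k r c B \<in> carrier_mat (k * r) c"
  by (simp add: stack_mats_def)

lemma stack_mats_dims [simp]:
  "dim_row (stack_mats k r c B) = k * r" "dim_col (stack_mats k r c B) = c"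
  by (simp_all add: stack_mats_def)

lemma index_stack_mats [simp]:
  "p < k * r \<Longrightarrow> j < c \<Longrightarrow> stack_mats k r c B $$ (p,j) = B (p div r) $$ (p mod r, j)"
  by (simp add: stack_mats_def)

lemma stack_vecs_cong:
  assumes "\<And>k. k < m \<Longrightarrow> u k = v k"
  shows "stack_vecs m d u = stack_vecs m d v"
  by (rule eq_vecI) (simp_all add: assms div_mod_block_index_less)

lemma stack_mats_mult_vec:
  assumes B: "\<And>k. k < m \<Longrightarrow> B k \<in> carrier_mat r c" and a: "a \<in> carrier_vec c"
  shows "stack_mats m r c B *\<^sub>v a = stack_vecs m r (\<lambda>k. B k *\<^sub>v a)"
proof (rule eq_vecI)
  fix p assume "p < dim_vec (stack_vecs m r (\<lambda>k. B k *\<^sub>v a))"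
  then have p: "p < m * r" by simp
  with B[of "p div r"] a show "(stack_mats m r c B *\<^sub>v a) $ p = stack_vecs m r (\<lambda>k. B k *\<^sub>v a) $ p"
    by (simp add: div_mod_block_index_less scalar_prod_def)
qed simp

lemma stack_vecs_minus:
  assumes "\<And>k. k < m \<Longrightarrow> u k \<in> carrier_vec d" "\<And>k. k < m \<Longrightarrow> v k \<in> carrier_vec d"
  shows "stack_vecs m d u - stack_vecs m d v = stack_vecs m d (\<lambda>k. u k - v k)"
proof (rule eq_vecI)
  fix p assume "p < dim_vec (stack_vecs m d (\<lambda>k. u k - v k))"
  then have p: "p < m * d" by simp
  with assms[of "p div d"] show "(stack_vecs m d u - stack_vecs m d v) $ p = stack_vecs m d (\<lambda>k. u k - v k) $ p"
    by (simp add: div_mod_block_index_less)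
qed simp

lemma conjugate_stack_vecs_scalar_prod:
  assumes "\<And>k. k < m \<Longrightarrow> xs k \<in> carrier_vec l" "\<And>k. k < m \<Longrightarrow> ys k \<in> carrier_vec l"
  shows "conjugate (stack_vecs m l xs) \<bullet> stack_vecs m l ys = (\<Sum>k<m. conjugate (xs k) \<bullet> ys k)"
proof -
  have "conjugate (stack_vecs m l xs) \<bullet> stack_vecs m l ys
      = (\<Sum>p<m * l. cnj (xs (p div l) $ (p mod l)) * ys (p div l) $ (p mod l))"
    by (simp add: scalar_prod_def atLeast0LessThan)
  also have "\<dots> = (\<Sum>k<m. \<Sum>j<l. cnj (xs ((k * l + j) div l) $ ((k * l + j) mod l))
                              * ys ((k * l + j) div l) $ ((k * l + j) mod l))"
    by (rule sum_lessThan_mult_blocks)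
  also have "\<dots> = (\<Sum>k<m. conjugate (xs k) \<bullet> ys k)"
  proof (intro sum.cong refl)
    fix k assume "k \<in> {..<m}"
    then have "xs k \<in> carrier_vec l" "ys k \<in> carrier_vec l" using assms by auto
    then show "(\<Sum>j<l. cnj (xs ((k * l + j) div l) $ ((k * l + j) mod l))
                 * ys ((k * l + j) div l) $ ((k * l + j) mod l)) = conjugate (xs k) \<bullet> ys k"
      by (simp add: scalar_prod_def atLeast0LessThan)
  qed
  finally show ?thesis .
qed

lemma dim_kron [simp]:
  "dim_row (kron A B) = dim_row A * dim_row B" "dim_col (kron A B) = dim_col A * dim_col B"
  by (simp_all add: kron_def)

lemma index_kron [simp]:
  "i < dim_row A * dim_row B \<Longrightarrow> j < dim_col A * dim_col B \<Longrightarrow>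
   kron A B $$ (i,j) = A $$ (i div dim_row B, j div dim_col B) * B $$ (i mod dim_row B, j mod dim_col B)"
  by (simp add: kron_def)

lemma kron_carrier:
  "A \<in> carrier_mat a b \<Longrightarrow> B \<in> carrier_mat c d \<Longrightarrow> kron A B \<in> carrier_mat (a * c) (b * d)"
  by (intro carrier_matI) simp_all

lemma kron_one_mult_stack_vecs:
  assumes W: "W \<in> carrier_mat r c" and xs: "\<And>k. k < m \<Longrightarrow> xs k \<in> carrier_vec c"
  shows "kron (1\<^sub>m m) W *\<^sub>v stack_vecs m c xs = stack_vecs m r (\<lambda>k. W *\<^sub>v xs k)"
proof (rule eq_vecI)
  fix p assume "p < dim_vec (stack_vecs m r (\<lambda>k. W *\<^sub>v xs k))"
  then have p: "p < m * r" by simp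
  note p_block = div_mod_block_index_less[OF p]
  have "(kron (1\<^sub>m m) W *\<^sub>v stack_vecs m c xs) $ p
      = (\<Sum>q<m * c. 1\<^sub>m m $$ (p div r, q div c) * W $$ (p mod r, q mod c) * xs (q div c) $ (q mod c))"
    using p W by (simp add: scalar_prod_def atLeast0LessThan)
  also have "\<dots> = (\<Sum>k<m. \<Sum>j<c. 1\<^sub>m m $$ (p div r, (k * c + j) div c) * W $$ (p mod r, (k * c + j) mod c)
                              * xs ((k * c + j) div c) $ ((k * c + j) mod c))"
    by (rule sum_lessThan_mult_blocks)
  also have "\<dots> = (\<Sum>k<m. if p div r = k then \<Sum>j<c. W $$ (p mod r, j) * xs k $ j else 0)"
    using p_block by (intro sum.cong refl) simp
  also have "\<dots> = stack_vecs m r (\<lambda>k. W *\<^sub>v xs k) $ p"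
    using p p_block W xs[of "p div r"] by (simp add: scalar_prod_def atLeast0LessThan)
  finally show "(kron (1\<^sub>m m) W *\<^sub>v stack_vecs m c xs) $ p = stack_vecs m r (\<lambda>k. W *\<^sub>v xs k) $ p" .
qed (use W in simp)

lemma Mnorm_kron_one_adj_mult:
  assumes B: "B \<in> carrier_mat r c" and xs: "\<And>k. k < m \<Longrightarrow> xs k \<in> carrier_vec c"
  shows "Mnorm (kron (1\<^sub>m m) (adj B * B)) (stack_vecs m c xs) = vnorm2 (stack_vecs m r (\<lambda>k. B *\<^sub>v xs k))"
proof -
  have BB: "adj B * B \<in> carrier_mat c c" using adj_carrier[OF B] B by (rule mult_carrier_mat)
  have "conjugate (stack_vecs m c xs) \<bullet> (kron (1\<^sub>m m) (adj B * B) *\<^sub>v stack_vecs m c xs)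
      = (\<Sum>k<m. conjugate (xs k) \<bullet> ((adj B * B) *\<^sub>v xs k))"
    using xs BB by (simp add: kron_one_mult_stack_vecs conjugate_stack_vecs_scalar_prod)
  also have "\<dots> = (\<Sum>k<m. conjugate (B *\<^sub>v xs k) \<bullet> (B *\<^sub>v xs k))"
    using xs B by (simp add: conjugate_scalar_prod_adj_mult)
  also have "\<dots> = conjugate (stack_vecs m r (\<lambda>k. B *\<^sub>v xs k)) \<bullet> stack_vecs m r (\<lambda>k. B *\<^sub>v xs k)"
    using xs B by (simp add: conjugate_stack_vecs_scalar_prod)
  finally show ?thesis
    by (simp add: Mnorm_def conjugate_scalar_prod_self vnorm2_nonneg)
qed

lemma adj_stack_mat_diag_mult:
  fixes m l :: nat and d :: "nat \<Rightarrow> nat \<Rightarrow> complex"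
  defines "S \<equiv> stack_mats m l l (\<lambda>k. mat_diag l (d k))"
  shows "adj S * S = mat_diag l (\<lambda>j. complex_of_real (\<Sum>k<m. (cmod (d k j))\<^sup>2))"
proof (rule eq_matI)
  fix i j assume "i < dim_row (mat_diag l (\<lambda>j. complex_of_real (\<Sum>k<m. (cmod (d k j))\<^sup>2)))"
    "j < dim_col (mat_diag l (\<lambda>j. complex_of_real (\<Sum>k<m. (cmod (d k j))\<^sup>2)))"
  then have i: "i < l" and j: "j < l" by (simp_all add: mat_diag_def)
  have S_block: "S $$ (k * l + r, q) = (if r = q then d k q else 0)" if "k < m" "r < l" "q < l" for k r q
    using that by (simp add: S_def block_index_less mat_diag_def)
  have "(adj S * S) $$ (i,j) = (\<Sum>p<m * l. cnj (S $$ (p,i)) * S $$ (p,j))"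
    using i j by (simp add: S_def scalar_prod_def atLeast0LessThan)
  also have "\<dots> = (\<Sum>k<m. \<Sum>r<l. cnj (S $$ (k * l + r, i)) * S $$ (k * l + r, j))"
    by (rule sum_lessThan_mult_blocks)
  also have "\<dots> = (\<Sum>k<m. \<Sum>r<l. if r = i then (if i = j then d k j * cnj (d k j) else 0) else 0)"
    using i j by (intro sum.cong refl) (simp add: S_block mult.commute)
  also have "\<dots> = (\<Sum>k<m. if i = j then complex_of_real ((cmod (d k j))\<^sup>2) else 0)"
    unfolding complex_norm_square using i by simp
  also have "\<dots> = mat_diag l (\<lambda>j. complex_of_real (\<Sum>k<m. (cmod (d k j))\<^sup>2)) $$ (i,j)"
    using i j by (simp add: mat_diag_def)
  finally show "(adj S * S) $$ (i,j) = mat_diag l (\<lambda>j. complex_of_real (\<Sum>k<m. (cmod (d k j))\<^sup>2)) $$ (i,j)" .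
qed (simp_all add: S_def mat_diag_def)

lemma minv_eqI:
  assumes R: "R \<in> carrier_mat l l" and B: "B \<in> carrier_mat l l"
    and RB: "R * B = 1\<^sub>m l" and BR: "B * R = 1\<^sub>m l"
  shows "minv R = B"
  unfolding minv_def
proof (rule the_equality)
  show "B \<in> carrier_mat (dim_row R) (dim_row R) \<and> inverts_mat R B \<and> inverts_mat B R"
    using R B RB BR by (auto simp: inverts_mat_def)
next
  fix C assume "C \<in> carrier_mat (dim_row R) (dim_row R) \<and> inverts_mat R C \<and> inverts_mat C R"
  then have C: "C \<in> carrier_mat l l" and CR: "C * R = 1\<^sub>m l"
    using R by (auto simp: inverts_mat_def)
  have "C = C * (R * B)" using C RB by simp
  also have "\<dots> = B" using assoc_mult_mat[OF C R B] CR B by simp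
  finally show "C = B" .
qed

lemma minv_carrier_and_inverse:
  assumes R: "R \<in> carrier_mat l l" and "invertible_mat R"
  shows "minv R \<in> carrier_mat l l" "R * minv R = 1\<^sub>m l" "minv R * R = 1\<^sub>m l"
proof -
  obtain B where "inverts_mat R B" "inverts_mat B R"
    using assms unfolding invertible_mat_def by blast
  then have RB: "R * B = 1\<^sub>m l" and BR: "B * R = 1\<^sub>m (dim_row B)"
    using R by (simp_all add: inverts_mat_def)
  have "dim_col B = l" using RB by (metis index_mult_mat(3) index_one_mat(3))
  moreover have "dim_row B = l" using BR R by (metis carrier_matD(2) index_mult_mat(3) index_one_mat(3))
  ultimately have B: "B \<in> carrier_mat l l" by blast
  have "minv R = B" using R B RB BR \<open>dim_row B = l\<close> by (intro minv_eqI) simp_all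
  then show "minv R \<in> carrier_mat l l" "R * minv R = 1\<^sub>m l" "minv R * R = 1\<^sub>m l"
    using B RB BR \<open>dim_row B = l\<close> by simp_all
qed

lemma minv_mult_adj:
  assumes R: "R \<in> carrier_mat l l" and "invertible_mat R"
  shows "minv (R * adj R) = adj (minv R) * minv R"
proof -
  define Ri where "Ri = minv R"
  have Ri: "Ri \<in> carrier_mat l l" and RRi: "R * Ri = 1\<^sub>m l" and RiR: "Ri * R = 1\<^sub>m l"
    using minv_carrier_and_inverse[OF assms] by (simp_all add: Ri_def)
  have aR: "adj R \<in> carrier_mat l l" and aRi: "adj Ri \<in> carrier_mat l l"
    using R Ri by simp_all
  have "(R * adj R) * (adj Ri * Ri) = R * ((adj R * adj Ri) * Ri)"
    using assoc_mult_mat[OF R aR mult_carrier_mat[OF aRi Ri]] assoc_mult_mat[OF aR aRi Ri] by simp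
  also have "adj R * adj Ri = 1\<^sub>m l" using adj_mult[OF Ri R] RiR by simp
  finally have right_inverse: "(R * adj R) * (adj Ri * Ri) = 1\<^sub>m l" using Ri RRi by simp
  have "(adj Ri * Ri) * (R * adj R) = adj Ri * ((Ri * R) * adj R)"
    using assoc_mult_mat[OF aRi Ri mult_carrier_mat[OF R aR]] assoc_mult_mat[OF Ri R aR] by simp
  also have "\<dots> = adj Ri * adj R" using RiR left_mult_one_mat[OF aR] by simp
  also have "\<dots> = 1\<^sub>m l" using adj_mult[OF R Ri] RRi by simp
  finally have left_inverse: "(adj Ri * Ri) * (R * adj R) = 1\<^sub>m l" .
  show ?thesis
    unfolding Ri_def[symmetric]
    using mult_carrier_mat[OF R aR] mult_carrier_mat[OF aRi Ri] right_inverse left_inverse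
    by (rule minv_eqI)
qed

lemma Mnorm_whitened_residual:
  assumes R: "R \<in> carrier_mat l l" and R_inv: "invertible_mat R"
    and g: "\<And>k. k < m \<Longrightarrow> g k \<in> carrier_vec l"
    and T: "\<And>k. k < m \<Longrightarrow> T k \<in> carrier_mat l c"
    and a: "a \<in> carrier_vec c"
  shows "Mnorm (kron (1\<^sub>m m) (minv (R * adj R))) (stack_vecs m l g - stack_mats m l c (\<lambda>k. R * T k) *\<^sub>v a)
       = vnorm2 (kron (1\<^sub>m m) (minv R) *\<^sub>v stack_vecs m l g - stack_mats m l c T *\<^sub>v a)"
proof -
  define Ri where "Ri = minv R"
  have Ri: "Ri \<in> carrier_mat l l" and RiR: "Ri * R = 1\<^sub>m l"
    using minv_carrier_and_inverse[OF R R_inv] by (simp_all add: Ri_def)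
  have RT: "R * T k \<in> carrier_mat l c" if "k < m" for k
    using R T[OF that] by (rule mult_carrier_mat)
  have RTa: "(R * T k) *\<^sub>v a \<in> carrier_vec l" if "k < m" for k
    using RT[OF that] a by (rule mult_mat_vec_carrier)
  have residual: "stack_vecs m l g - stack_mats m l c (\<lambda>k. R * T k) *\<^sub>v a
      = stack_vecs m l (\<lambda>k. g k - (R * T k) *\<^sub>v a)"
    using g RT RTa a by (simp add: stack_mats_mult_vec stack_vecs_minus)
  have whitened: "Ri *\<^sub>v (g k - (R * T k) *\<^sub>v a) = Ri *\<^sub>v g k - T k *\<^sub>v a" if k: "k < m" for k
  proof -
    have "Ri *\<^sub>v ((R * T k) *\<^sub>v a) = ((Ri * R) * T k) *\<^sub>v a"
      using assoc_mult_mat_vec[OF Ri RT[OF k] a] assoc_mult_mat[OF Ri R T[OF k]] by simp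
    then show ?thesis
      using mult_minus_distrib_mat_vec[OF Ri g[OF k] RTa[OF k]] RiR T[OF k] by simp
  qed
  have "Mnorm (kron (1\<^sub>m m) (adj Ri * Ri)) (stack_vecs m l (\<lambda>k. g k - (R * T k) *\<^sub>v a))
      = vnorm2 (stack_vecs m l (\<lambda>k. Ri *\<^sub>v (g k - (R * T k) *\<^sub>v a)))"
    using Ri g RTa by (intro Mnorm_kron_one_adj_mult) simp_all
  also have "stack_vecs m l (\<lambda>k. Ri *\<^sub>v (g k - (R * T k) *\<^sub>v a))
      = stack_vecs m l (\<lambda>k. Ri *\<^sub>v g k - T k *\<^sub>v a)"
    using whitened by (rule stack_vecs_cong)
  also have "\<dots> = stack_vecs m l (\<lambda>k. Ri *\<^sub>v g k) - stack_vecs m l (\<lambda>k. T k *\<^sub>v a)"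
    using mult_mat_vec_carrier[OF Ri g] mult_mat_vec_carrier[OF T a]
    by (intro stack_vecs_minus[symmetric])
  also have "\<dots> = kron (1\<^sub>m m) Ri *\<^sub>v stack_vecs m l g - stack_mats m l c T *\<^sub>v a"
    using kron_one_mult_stack_vecs[OF Ri g] stack_mats_mult_vec[OF T a] by simp
  finally show ?thesis
    using minv_mult_adj[OF R R_inv] residual by (simp add: Ri_def)
qed

theorem proposition5p1:
  fixes n l m :: nat
    and A :: "complex mat" and f1 :: "complex vec"
    and z :: "nat \<Rightarrow> complex vec" and Q R :: "complex mat"
    and lam :: "nat \<Rightarrow> complex"
  assumes A: "A \<in> carrier_mat n n"
    and f1: "f1 \<in> carrier_vec n"
    and z: "\<And>j. j < l \<Longrightarrow> z j \<in> carrier_vec n"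
    and indep: "\<And>c. c \<in> carrier_vec l \<Longrightarrow>
                  mat n l (\<lambda>(i,j). z j $ i) *\<^sub>v c = 0\<^sub>v n \<Longrightarrow> c = 0\<^sub>v l"
    and Q: "Q \<in> carrier_mat n l" and Qorth: "adj Q * Q = 1\<^sub>m l"
    and R: "R \<in> carrier_mat l l" and Rut: "upper_triangular R" and Rinv: "invertible_mat R"
    and QR: "mat n l (\<lambda>(i,j). z j $ i) = Q * R"
  defines "gv \<equiv> stack_vecs m l (\<lambda>k. adj Q *\<^sub>v ((A ^\<^sub>m k) *\<^sub>v f1))"
    and "S \<equiv> stack_mats m l l (\<lambda>k. R * mat_diag l (\<lambda>j. lam j ^ k))"
    and "alpha \<equiv> pinv (stack_mats m l l (\<lambda>k. mat_diag l (\<lambda>j. lam j ^ k)))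
                   *\<^sub>v (kron (1\<^sub>m m) (minv R) *\<^sub>v
                        stack_vecs m l (\<lambda>k. adj Q *\<^sub>v ((A ^\<^sub>m k) *\<^sub>v f1)))"
    and "M \<equiv> kron (1\<^sub>m m) (minv (R * adj R))"
  shows "alpha \<in> carrier_vec l
    \<and> (\<forall>a \<in> carrier_vec l. Mnorm M (gv - S *\<^sub>v alpha) \<le> Mnorm M (gv - S *\<^sub>v a))
    \<and> (\<forall>b \<in> carrier_vec l.
         (\<forall>a \<in> carrier_vec l. Mnorm M (gv - S *\<^sub>v b) \<le> Mnorm M (gv - S *\<^sub>v a))
         \<longrightarrow> b \<noteq> alpha \<longrightarrow> vnorm2 alpha < vnorm2 b)"
proof -
  define D where "D = stack_mats m l l (\<lambda>k. mat_diag l (\<lambda>j. lam j ^ k))"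
  define d where "d j = (\<Sum>k<m. (cmod (lam j ^ k))\<^sup>2)" for j
  define h where "h = kron (1\<^sub>m m) (minv R) *\<^sub>v gv"
  define X where "X = mat_diag l (\<lambda>j. complex_of_real (inverse (d j))) * adj D"
  have g: "adj Q *\<^sub>v ((A ^\<^sub>m k) *\<^sub>v f1) \<in> carrier_vec l" for k
    using adj_carrier[OF Q] mult_mat_vec_carrier[OF pow_carrier_mat[OF A] f1] by (rule mult_mat_vec_carrier)
  have D: "D \<in> carrier_mat (m * l) l"
    by (simp add: D_def)
  have h: "h \<in> carrier_vec (m * l)"
    unfolding h_def gv_def
    using kron_carrier[OF one_carrier_mat minv_carrier_and_inverse(1)[OF R Rinv]] stack_vecs_carrier
    by (rule mult_mat_vec_carrier)
  have "adj D * D = mat_diag l (\<lambda>j. complex_of_real (d j))"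
    unfolding D_def d_def by (rule adj_stack_mat_diag_mult)
  with D have X: "is_pinv D X"
    unfolding X_def by (rule is_pinv_orthogonal_columns)
  have "alpha = X *\<^sub>v h"
    unfolding alpha_def D_def[symmetric] gv_def[symmetric] h_def[symmetric] pinv_eqI[OF X] ..
  then have "is_min_norm_minimizer (\<lambda>a. vnorm2 (h - D *\<^sub>v a)) l alpha"
    using is_min_norm_minimizer_pinv[OF D X h] by simp
  moreover have "Mnorm M (gv - S *\<^sub>v a) = vnorm2 (h - D *\<^sub>v a)" if "a \<in> carrier_vec l" for a
    unfolding M_def gv_def S_def h_def D_def using R Rinv g _ that
    by (rule Mnorm_whitened_residual) simp
  then have "is_min_norm_minimizer (\<lambda>a. Mnorm M (gv - S *\<^sub>v a)) l alpha
      \<longleftrightarrow> is_min_norm_minimizer (\<lambda>a. vnorm2 (h - D *\<^sub>v a)) l alpha"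
    by (rule is_min_norm_minimizer_cong)
  ultimately show ?thesis
    unfolding is_min_norm_minimizer_def by blast
qed

end
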